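(* Let $0=t_0<t_1<\dots<t_n=1$ be a grid. Consider the following random procedure (the remasked AUDM sampler with the exact noise-conditioned denoiser). 1. Draw $U_{t_n}$ uniformly from $\mathsf X$, then draw $X_{t_n}\sim p_{t_n}(\cdot\mid U_{t_n})$. 2. For $i=n-1,n-2,\dots,0$: - draw $X_0'\sim p_{0|t_{i+1}}(\cdot\mid X_{t_{i+1}},U_{t_{i+1}})$; - draw $X_{t_i}\sim q_{t_i|0,t_{i+1}}(\cdot\mid X_0',X_{t_{i+1}})$ (for $t_i=0$ this means $X_{t_0}=X_0'$); - independently over $\ell$, draw $U^\ell_{t_i}$ as follows: if $X^\ell_{t_i}\ne X_0'^{\,\ell}$, set $U^\ell_{t_i}=X^\ell_{t_i}$; otherwise draw $U^\ell_{t_i}\sim\mathrm{Cat}\big(\frac{X_0'^{\,\ell}+\alpha_{t_i}(\mathbf 1-X_0'^{\,\ell})}{1+(K-1)\alpha_{t_i}}\big)$. Then the law of $(X_{t_0},\dots,X_{t_n})$ is the UDM reverse-chain law $$p_{t_n}(\mathbf x_{t_n})\prod_{i=1}^n p_{t_{i-1}|t_i}(\mathbf x_{t_{i-1}}\mid\mathbf x_{t_i}).$$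
   Context: **UDM setup.** - Let $K\ge2$, $L\ge1$ and $\mathsf V=\{1,\dots,K\}$. Tokens are identified with the standard basis vectors of $\mathbb R^K$, and $\mathbf 1$ is the all-ones vector. - $\mathsf X=\mathsf V^L$, with $\mathbf x^\ell$ the $\ell$-th token. $p_0$ is a distribution on $\mathsf X$. - The schedule $\alpha:[0,1]\to[0,1]$ is strictly decreasing, with $\alpha_0=1$ and $\alpha_t\in(0,1)$ for $t\in(0,1]$. Set $\alpha_{t|s}=\alpha_t/\alpha_s$. - The UDM forward kernel is $q_{t|s}(\mathbf x_t\mid\mathbf x_s)=\prod_\ell\langle\mathbf x_t^\ell,\alpha_{t|s}\mathbf x_s^\ell+(1-\alpha_{t|s})\mathbf 1/K\rangle$. - $p_t(\mathbf x)=\sum_{\mathbf x_0}p_0(\mathbf x_0)q_{t|0}(\mathbf x\mid\mathbf x_0)$. - UDM reverse kernel: $p_{s|t}(\mathbf x_s\mid\mathbf x_t)=p_s(\mathbf x_s)q_{t|s}(\mathbf x_t\mid\mathbf x_s)/p_t(\mathbf x_t)$. - UDM bridge: $q_{s|0,t}(\mathbf x_s\mid\mathbf x_0,\mathbf x_t)=q_{t|s}(\mathbf x_t\mid\mathbf x_s)q_{s|0}(\mathbf x_s\mid\mathbf x_0)/q_{t|0}(\mathbf x_t\mid\mathbf x_0)$ for $s>0$, and $q_{0|0,t}(\mathbf x\mid\mathbf x_0,\mathbf x_t)=\mathbf 1\{\mathbf x=\mathbf x_0\}$. **Absorbing lifting.** - For $\mathbf u\in\mathsf X$, define $q_{t|0}(\mathbf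 x_t\mid\mathbf x_0,\mathbf u)=\prod_\ell\langle\mathbf x_t^\ell,\alpha_t\mathbf x_0^\ell+(1-\alpha_t)\mathbf u^\ell\rangle$. - $p_t(\mathbf x\mid\mathbf u)=\sum_{\mathbf x_0}p_0(\mathbf x_0)q_{t|0}(\mathbf x\mid\mathbf x_0,\mathbf u)$. - Noise-conditioned denoiser: $p_{0|t}(\mathbf x_0\mid\mathbf x_t,\mathbf u)=p_0(\mathbf x_0)q_{t|0}(\mathbf x_t\mid\mathbf x_0,\mathbf u)/p_t(\mathbf x_t\mid\mathbf u)$, defined when $p_t(\mathbf x_t\mid\mathbf u)>0$. *)

theory Defs
  imports "HOL-Library.FuncSet" Complex_Main
begin

text \<open>Tokens are 1..K (token v corresponds to the standard basis vector e_v).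
  A sequence is a function on {0..<L} (extensional, PiE).\<close>

definition Xsp :: "nat \<Rightarrow> nat \<Rightarrow> (nat \<Rightarrow> nat) set" where
  "Xsp K L = {0..<L} \<rightarrow>\<^sub>E {1..K}"

text \<open>Token-level inner product  < e_i , a e_j + (1-a) 1/K >.\<close>
definition tok_kernel :: "nat \<Rightarrow> real \<Rightarrow> nat \<Rightarrow> nat \<Rightarrow> real" where
  "tok_kernel K a i j = a * (if i = j then 1 else 0) + (1 - a) / real K"

definition q_udm :: "nat \<Rightarrow> nat \<Rightarrow> (real \<Rightarrow> real) \<Rightarrow> real \<Rightarrow> real
    \<Rightarrow> (nat \<Rightarrow> nat) \<Rightarrow> (nat \<Rightarrow> nat) \<Rightarrow> real" where
  "q_udm K L \<alpha> t s xt xs = (\<Prod>l<L. tok_kernel K (\<alpha> t / \<alpha> s) (xt l) (xs l))"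

definition p_udm :: "nat \<Rightarrow> nat \<Rightarrow> (real \<Rightarrow> real) \<Rightarrow> ((nat \<Rightarrow> nat) \<Rightarrow> real) \<Rightarrow> real
    \<Rightarrow> (nat \<Rightarrow> nat) \<Rightarrow> real" where
  "p_udm K L \<alpha> p0 t x = (\<Sum>x0\<in>Xsp K L. p0 x0 * q_udm K L \<alpha> t 0 x x0)"

definition rev_udm :: "nat \<Rightarrow> nat \<Rightarrow> (real \<Rightarrow> real) \<Rightarrow> ((nat \<Rightarrow> nat) \<Rightarrow> real) \<Rightarrow> real \<Rightarrow> real
    \<Rightarrow> (nat \<Rightarrow> nat) \<Rightarrow> (nat \<Rightarrow> nat) \<Rightarrow> real" where
  "rev_udm K L \<alpha> p0 s t xs xt =
     p_udm K L \<alpha> p0 s xs * q_udm K L \<alpha> t s xt xs / p_udm K L \<alpha> p0 t xt"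

definition bridge_udm :: "nat \<Rightarrow> nat \<Rightarrow> (real \<Rightarrow> real) \<Rightarrow> real \<Rightarrow> real
    \<Rightarrow> (nat \<Rightarrow> nat) \<Rightarrow> (nat \<Rightarrow> nat) \<Rightarrow> (nat \<Rightarrow> nat) \<Rightarrow> real" where
  "bridge_udm K L \<alpha> s t xs x0 xt =
     (if s = 0 then (if xs = x0 then 1 else 0)
      else q_udm K L \<alpha> t s xt xs * q_udm K L \<alpha> s 0 xs x0 / q_udm K L \<alpha> t 0 xt x0)"

definition q_abs :: "nat \<Rightarrow> (real \<Rightarrow> real) \<Rightarrow> real
    \<Rightarrow> (nat \<Rightarrow> nat) \<Rightarrow> (nat \<Rightarrow> nat) \<Rightarrow> (nat \<Rightarrow> nat) \<Rightarrow> real" where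
  "q_abs L \<alpha> t xt x0 u =
     (\<Prod>l<L. \<alpha> t * (if xt l = x0 l then 1 else 0) + (1 - \<alpha> t) * (if xt l = u l then 1 else 0))"

definition p_abs :: "nat \<Rightarrow> nat \<Rightarrow> (real \<Rightarrow> real) \<Rightarrow> ((nat \<Rightarrow> nat) \<Rightarrow> real) \<Rightarrow> real
    \<Rightarrow> (nat \<Rightarrow> nat) \<Rightarrow> (nat \<Rightarrow> nat) \<Rightarrow> real" where
  "p_abs K L \<alpha> p0 t x u = (\<Sum>x0\<in>Xsp K L. p0 x0 * q_abs L \<alpha> t x x0 u)"

text \<open>Noise-conditioned denoiser p_{0|t}(x0 | xt, u) (only used where p_t(xt|u) > 0;
  elsewhere HOL division by zero gives 0, and such states have probability 0 in the sampler).\<close>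
definition den_abs :: "nat \<Rightarrow> nat \<Rightarrow> (real \<Rightarrow> real) \<Rightarrow> ((nat \<Rightarrow> nat) \<Rightarrow> real) \<Rightarrow> real
    \<Rightarrow> (nat \<Rightarrow> nat) \<Rightarrow> (nat \<Rightarrow> nat) \<Rightarrow> (nat \<Rightarrow> nat) \<Rightarrow> real" where
  "den_abs K L \<alpha> p0 t x0 xt u = p0 x0 * q_abs L \<alpha> t xt x0 u / p_abs K L \<alpha> p0 t xt u"

definition u_kernel :: "nat \<Rightarrow> nat \<Rightarrow> real
    \<Rightarrow> (nat \<Rightarrow> nat) \<Rightarrow> (nat \<Rightarrow> nat) \<Rightarrow> (nat \<Rightarrow> nat) \<Rightarrow> real" where
  "u_kernel K L a u x x0 =
     (\<Prod>l<L. if x l \<noteq> x0 l then (if u l = x l then 1 else 0)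
             else (if u l = x0 l then 1 else a) / (1 + (real K - 1) * a))"

text \<open>Joint law of (X_{t_0},...,X_{t_n}) produced by the remasked AUDM sampler:
  the auxiliary variables U_{t_0..t_n} and X_0' (one per step i<n) are marginalised out.\<close>
definition sampler_law :: "nat \<Rightarrow> nat \<Rightarrow> (real \<Rightarrow> real) \<Rightarrow> ((nat \<Rightarrow> nat) \<Rightarrow> real)
    \<Rightarrow> nat \<Rightarrow> (nat \<Rightarrow> real) \<Rightarrow> (nat \<Rightarrow> (nat \<Rightarrow> nat)) \<Rightarrow> real" where
  "sampler_law K L \<alpha> p0 n ts xs =
     (\<Sum>us\<in>{0..n} \<rightarrow>\<^sub>E Xsp K L. \<Sum>x0s\<in>{0..<n} \<rightarrow>\<^sub>E Xsp K L.
        (1 / real (card (Xsp K L))) * p_abs K L \<alpha> p0 (ts n) (xs n) (us n) *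
        (\<Prod>i<n. den_abs K L \<alpha> p0 (ts (Suc i)) (x0s i) (xs (Suc i)) (us (Suc i))
               * bridge_udm K L \<alpha> (ts i) (ts (Suc i)) (xs i) (x0s i) (xs (Suc i))
               * u_kernel K L (\<alpha> (ts i)) (us i) (xs i) (x0s i)))"

end

theory Submission
  imports Defs
begin

(* Work backwards along the grid with the joint weight of (X_{t_k}, U_{t_k}). The sampler keeps
   the invariant that this pair has weight p_{t_k}(x | u) / K^L, i.e. U uniform and X drawn from
   the absorbing lifting: one step maps the weight p_t(x_t | u) / K^L to
   q_{t|s}(x_t | x_s) p_s(x_s | u') / K^L. This combines Bayes' rule for the noise-conditioned
   denoiser, the Markov identity q_{s|0,t} q_{t|0} = q_{t|s} q_{s|0} for the bridge, and the fact
   that a UDM transition followed by remasking is the absorbing lifting with uniform noise.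
   Summing out U_{t_0} (sum_u p_t(x | u) = K^L p_t(x)) leaves p_{t_0}(x_{t_0}) prod_i q_{t_i|t_{i-1}},
   the forward-chain law, which telescopes into the reverse-chain law. *)

lemma sum_PiE_insert:
  assumes "a \<notin> A"
  shows "(\<Sum>f\<in>PiE (insert a A) B. g f) = (\<Sum>x\<in>B a. \<Sum>f\<in>PiE A B. g (f(a := x)))"
proof -
  have "(\<Sum>f\<in>PiE (insert a A) B. g f) = (\<Sum>p\<in>B a \<times> PiE A B. g ((\<lambda>(y, h). h(a := y)) p))"
    unfolding PiE_insert_eq by (subst sum.reindex[OF inj_combinator[OF assms]]) simp
  also have "\<dots> = (\<Sum>x\<in>B a. \<Sum>f\<in>PiE A B. g (f(a := x)))"
    by (simp add: sum.cartesian_product split_beta)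
  finally show ?thesis .
qed

lemma sum_PiE_chain_peel:
  fixes h :: "'s \<Rightarrow> 'a::comm_semiring_1"
  shows "(\<Sum>us\<in>{0..Suc n} \<rightarrow>\<^sub>E S. \<Sum>ys\<in>{0..<Suc n} \<rightarrow>\<^sub>E T.
            h (us (Suc n)) * (\<Prod>i<Suc n. F i (us (Suc i)) (ys i) (us i)))
       = (\<Sum>us\<in>{0..n} \<rightarrow>\<^sub>E S. \<Sum>ys\<in>{0..<n} \<rightarrow>\<^sub>E T.
            (\<Sum>u\<in>S. \<Sum>y\<in>T. h u * F n u y (us n)) * (\<Prod>i<n. F i (us (Suc i)) (ys i) (us i)))"
proof -
  let ?P = "\<lambda>us ys. \<Prod>i<n. F i (us (Suc i)) (ys i) (us i)"
  have "{0..Suc n} = insert (Suc n) {0..n}" "{0..<Suc n} = insert n {0..<n}" by auto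
  then have "(\<Sum>us\<in>{0..Suc n} \<rightarrow>\<^sub>E S. \<Sum>ys\<in>{0..<Suc n} \<rightarrow>\<^sub>E T.
            h (us (Suc n)) * (\<Prod>i<Suc n. F i (us (Suc i)) (ys i) (us i)))
      = (\<Sum>u\<in>S. \<Sum>us\<in>{0..n} \<rightarrow>\<^sub>E S. \<Sum>y\<in>T. \<Sum>ys\<in>{0..<n} \<rightarrow>\<^sub>E T. h u * F n u y (us n) * ?P us ys)"
    by (simp add: sum_PiE_insert lessThan_Suc mult_ac)
  also have "\<dots> = (\<Sum>us\<in>{0..n} \<rightarrow>\<^sub>E S. \<Sum>ys\<in>{0..<n} \<rightarrow>\<^sub>E T. \<Sum>u\<in>S. \<Sum>y\<in>T. h u * F n u y (us n) * ?P us ys)"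
    by (subst sum.swap) (intro sum.cong refl trans[OF sum.swap])
  finally show ?thesis by (simp add: sum_distrib_right)
qed

lemma sum_PiE_chain:
  fixes g :: "nat \<Rightarrow> 's \<Rightarrow> 'a::comm_semiring_1"
  assumes step: "\<And>k v. k < n \<Longrightarrow> v \<in> S \<Longrightarrow> (\<Sum>u\<in>S. \<Sum>y\<in>T. g (Suc k) u * F k u y v) = g k v"
  shows "(\<Sum>us\<in>{0..n} \<rightarrow>\<^sub>E S. \<Sum>ys\<in>{0..<n} \<rightarrow>\<^sub>E T.
            g n (us n) * (\<Prod>i<n. F i (us (Suc i)) (ys i) (us i)))
       = (\<Sum>u\<in>S. g 0 u)"
  using step
proof (induction n)
  case 0
  show ?case
    using sum_PiE_insert[where a=0 and A="{}" and B="\<lambda>_. S" and g="\<lambda>us. g 0 (us 0)"] by simp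
next
  case (Suc n)
  have "(\<Sum>us\<in>{0..Suc n} \<rightarrow>\<^sub>E S. \<Sum>ys\<in>{0..<Suc n} \<rightarrow>\<^sub>E T.
            g (Suc n) (us (Suc n)) * (\<Prod>i<Suc n. F i (us (Suc i)) (ys i) (us i)))
      = (\<Sum>us\<in>{0..n} \<rightarrow>\<^sub>E S. \<Sum>ys\<in>{0..<n} \<rightarrow>\<^sub>E T.
            g n (us n) * (\<Prod>i<n. F i (us (Suc i)) (ys i) (us i)))"
    unfolding sum_PiE_chain_peel using Suc.prems by (intro sum.cong refl) (auto simp: PiE_iff)
  also have "\<dots> = (\<Sum>u\<in>S. g 0 u)"
    using Suc by simp
  finally show ?case .
qed

lemma prod_ratio_telescope:
  fixes P :: "nat \<Rightarrow> 'a::field"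
  assumes "\<And>i. 0 < i \<Longrightarrow> i \<le> n \<Longrightarrow> P i \<noteq> 0"
  shows "P n * (\<Prod>i\<in>{1..n}. P (i - 1) / P i) = P 0"
  using assms
proof (induction n)
  case (Suc n)
  then show ?case
    by (simp add: prod.nat_ivl_Suc' mult_ac)
qed simp

lemma finite_Xsp: "finite (Xsp K L)"
  by (simp add: Xsp_def finite_PiE)

lemma card_Xsp: "card (Xsp K L) = K ^ L"
  by (simp add: Xsp_def card_PiE)

lemma Xsp_eqI: "x \<in> Xsp K L \<Longrightarrow> y \<in> Xsp K L \<Longrightarrow> (\<And>l. l < L \<Longrightarrow> x l = y l) \<Longrightarrow> x = y"
  by (rule PiE_ext[of x "{0..<L}" "\<lambda>_. {1..K}"]) (auto simp: Xsp_def)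

lemma tok_kernel_pos: "0 \<le> a \<Longrightarrow> a < 1 \<Longrightarrow> 0 < K \<Longrightarrow> 0 < tok_kernel K a i j"
  unfolding tok_kernel_def by (auto intro: add_nonneg_pos)

lemma q_udm_pos:
  "0 \<le> \<alpha> t / \<alpha> s \<Longrightarrow> \<alpha> t / \<alpha> s < 1 \<Longrightarrow> 0 < K \<Longrightarrow> 0 < q_udm K L \<alpha> t s x y"
  unfolding q_udm_def by (intro prod_pos tok_kernel_pos) auto

lemma q_udm_same_time:
  assumes "\<alpha> s \<noteq> 0" and "x \<in> Xsp K L" and "y \<in> Xsp K L"
  shows "q_udm K L \<alpha> s s x y = (if x = y then 1 else 0)"
proof -
  have "q_udm K L \<alpha> s s x y = (\<Prod>l<L. if x l = y l then 1 else 0)"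
    using assms(1) by (simp add: q_udm_def tok_kernel_def)
  then show ?thesis
    using Xsp_eqI[OF assms(2,3)] by auto
qed

lemma q_abs_nonneg: "0 \<le> \<alpha> t \<Longrightarrow> \<alpha> t \<le> 1 \<Longrightarrow> 0 \<le> q_abs L \<alpha> t x y u"
  unfolding q_abs_def by (intro prod_nonneg) auto

lemma sum_q_abs_eq_q_udm:
  assumes K: "0 < K" and x: "x \<in> Xsp K L" and \<alpha>0: "\<alpha> 0 = 1"
  shows "(\<Sum>u\<in>Xsp K L. q_abs L \<alpha> t x y u) = real K ^ L * q_udm K L \<alpha> t 0 x y"
proof -
  let ?f = "\<lambda>l c. \<alpha> t * (if x l = y l then 1 else 0) + (1 - \<alpha> t) * (if x l = c then 1 else 0 :: real)"
  have token: "(\<Sum>c\<in>{1..K}. ?f l c) = real K * tok_kernel K (\<alpha> t) (x l) (y l)" if "l < L" for l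
  proof -
    have "x l \<in> {1..K}"
      using x that by (auto simp: Xsp_def)
    then have "(\<Sum>c\<in>{1..K}. (1 - \<alpha> t) * (if x l = c then 1 else 0)) = 1 - \<alpha> t"
      by (simp add: sum_distrib_left[symmetric])
    then have "(\<Sum>c\<in>{1..K}. ?f l c) = real K * (\<alpha> t * (if x l = y l then 1 else 0)) + (1 - \<alpha> t)"
      unfolding sum.distrib by simp
    also have "\<dots> = real K * tok_kernel K (\<alpha> t) (x l) (y l)"
      using K by (simp add: tok_kernel_def field_simps)
    finally show ?thesis .
  qed
  have "(\<Sum>u\<in>Xsp K L. q_abs L \<alpha> t x y u) = (\<Prod>l\<in>{0..<L}. \<Sum>c\<in>{1..K}. ?f l c)"
    unfolding q_abs_def Xsp_def atLeast0LessThan[symmetric] by (rule prod_sum_PiE[symmetric]) auto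
  also have "\<dots> = real K ^ L * q_udm K L \<alpha> t 0 x y"
    using token \<alpha>0 by (simp add: q_udm_def prod.distrib atLeast0LessThan)
  finally show ?thesis .
qed

lemma sum_p_abs_eq_p_udm:
  assumes "0 < K" and "x \<in> Xsp K L" and "\<alpha> 0 = 1"
  shows "(\<Sum>u\<in>Xsp K L. p_abs K L \<alpha> p0 t x u) = real K ^ L * p_udm K L \<alpha> p0 t x"
proof -
  have "(\<Sum>u\<in>Xsp K L. p_abs K L \<alpha> p0 t x u) = (\<Sum>y\<in>Xsp K L. p0 y * (\<Sum>u\<in>Xsp K L. q_abs L \<alpha> t x y u))"
    unfolding p_abs_def by (subst sum.swap) (simp add: sum_distrib_left)
  then show ?thesis
    using sum_q_abs_eq_q_udm[where \<alpha>=\<alpha> and t=t] assms by (simp add: p_udm_def sum_distrib_left mult_ac)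
qed

lemma p_abs_mult_den_abs:
  assumes p0: "\<And>y. y \<in> Xsp K L \<Longrightarrow> 0 \<le> p0 y" and y: "y \<in> Xsp K L"
    and "0 \<le> \<alpha> t" "\<alpha> t \<le> 1"
  shows "p_abs K L \<alpha> p0 t x u * den_abs K L \<alpha> p0 t y x u = p0 y * q_abs L \<alpha> t x y u"
proof (cases "p_abs K L \<alpha> p0 t x u = 0")
  case True
  have "\<forall>y\<in>Xsp K L. p0 y * q_abs L \<alpha> t x y u = 0"
    using True p0 q_abs_nonneg[of \<alpha> t] assms(3,4) unfolding p_abs_def
    by (subst sum_nonneg_eq_0_iff[symmetric]) (auto simp: finite_Xsp)
  then show ?thesis
    using True y by simp
qed (simp add: den_abs_def)

lemma tok_kernel_mult_remask:
  assumes "0 \<le> a" and "0 < K"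
  shows "tok_kernel K a x y * (if x \<noteq> y then (if u = x then 1 else 0)
             else (if u = y then 1 else a) / (1 + (real K - 1) * a))
       = (a * (if x = y then 1 else 0) + (1 - a) * (if x = u then 1 else 0)) / real K"
proof -
  have "0 < 1 + (real K - 1) * a"
    using assms by (simp add: add_pos_nonneg Suc_le_eq)
  moreover have "tok_kernel K a x x = (1 + (real K - 1) * a) / real K"
    using assms by (simp add: tok_kernel_def field_simps)
  ultimately show ?thesis
    by (cases "x = y") (auto simp: tok_kernel_def)
qed

(* The remasking distribution is tailored to this: a UDM transition from x_0 followed by
   remasking is the absorbing lifting with uniform noise. *)
lemma q_udm_mult_u_kernel:
  assumes "0 \<le> \<alpha> s" and "0 < K" and "\<alpha> 0 = 1"
  shows "q_udm K L \<alpha> s 0 z y * u_kernel K L (\<alpha> s) v z y = q_abs L \<alpha> s z y v / real K ^ L"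
  using assms
  by (simp add: q_udm_def u_kernel_def q_abs_def tok_kernel_mult_remask prod_dividef
      flip: prod.distrib)

(* At s = 0 the bridge is a point mass and q_{0|0} is the identity kernel, so both cases agree. *)
lemma bridge_udm_mult_q_udm:
  assumes "\<alpha> 0 = 1" and "q_udm K L \<alpha> t 0 x y \<noteq> 0" and "y \<in> Xsp K L" and "z \<in> Xsp K L"
  shows "bridge_udm K L \<alpha> s t z y x * q_udm K L \<alpha> t 0 x y
       = q_udm K L \<alpha> t s x z * q_udm K L \<alpha> s 0 z y"
  using assms q_udm_same_time[of \<alpha> 0 z K L y] by (auto simp: bridge_udm_def)

lemma remasked_step:
  assumes K: "0 < K" and p0: "\<And>y. y \<in> Xsp K L \<Longrightarrow> 0 \<le> p0 y"
    and x: "x \<in> Xsp K L" and z: "z \<in> Xsp K L" and \<alpha>0: "\<alpha> 0 = 1"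
    and \<alpha>t: "0 \<le> \<alpha> t" "\<alpha> t < 1" and \<alpha>s: "0 \<le> \<alpha> s" "\<alpha> s \<le> 1"
  shows "(\<Sum>u\<in>Xsp K L. \<Sum>y\<in>Xsp K L. p_abs K L \<alpha> p0 t x u * den_abs K L \<alpha> p0 t y x u
            * bridge_udm K L \<alpha> s t z y x * u_kernel K L (\<alpha> s) v z y)
       = q_udm K L \<alpha> t s x z * p_abs K L \<alpha> p0 s z v"
proof -
  let ?X = "Xsp K L" and ?N = "real K ^ L"
  let ?br = "\<lambda>y. bridge_udm K L \<alpha> s t z y x" and ?uk = "\<lambda>y. u_kernel K L (\<alpha> s) v z y"
  have "(\<Sum>u\<in>?X. \<Sum>y\<in>?X. p_abs K L \<alpha> p0 t x u * den_abs K L \<alpha> p0 t y x u * ?br y * ?uk y)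
      = (\<Sum>y\<in>?X. \<Sum>u\<in>?X. p0 y * q_abs L \<alpha> t x y u * ?br y * ?uk y)"
    using p_abs_mult_den_abs[where \<alpha>=\<alpha> and t=t, OF p0] \<alpha>t
    by (subst sum.swap) (simp flip: mult.assoc[of "p_abs K L \<alpha> p0 t x _"])
  also have "\<dots> = (\<Sum>y\<in>?X. p0 y * ?N * (?br y * q_udm K L \<alpha> t 0 x y) * ?uk y)"
  proof (intro sum.cong refl)
    fix y
    have "(\<Sum>u\<in>?X. p0 y * q_abs L \<alpha> t x y u * ?br y * ?uk y)
        = p0 y * ?br y * ?uk y * (\<Sum>u\<in>?X. q_abs L \<alpha> t x y u)"
      by (simp add: sum_distrib_left mult_ac)
    then show "(\<Sum>u\<in>?X. p0 y * q_abs L \<alpha> t x y u * ?br y * ?uk y)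
        = p0 y * ?N * (?br y * q_udm K L \<alpha> t 0 x y) * ?uk y"
      using sum_q_abs_eq_q_udm[where \<alpha>=\<alpha> and t=t, OF K x] \<alpha>0 by (simp add: mult_ac)
  qed
  also have "\<dots> = (\<Sum>y\<in>?X. q_udm K L \<alpha> t s x z * (p0 y * (?N * (q_udm K L \<alpha> s 0 z y * ?uk y))))"
  proof (intro sum.cong refl)
    fix y assume y: "y \<in> ?X"
    have "q_udm K L \<alpha> t 0 x y \<noteq> 0"
      using q_udm_pos[of \<alpha> t 0] K \<alpha>0 \<alpha>t by (metis div_by_1 less_irrefl)
    then show "p0 y * ?N * (?br y * q_udm K L \<alpha> t 0 x y) * ?uk y
        = q_udm K L \<alpha> t s x z * (p0 y * (?N * (q_udm K L \<alpha> s 0 z y * ?uk y)))"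
      using bridge_udm_mult_q_udm[where \<alpha>=\<alpha>, OF \<alpha>0 _ y z] by (simp add: mult_ac)
  qed
  also have "\<dots> = q_udm K L \<alpha> t s x z * p_abs K L \<alpha> p0 s z v"
    using q_udm_mult_u_kernel[where \<alpha>=\<alpha> and s=s, OF \<alpha>s(1) K] \<alpha>0 K
    by (simp add: p_abs_def sum_distrib_left)
  finally show ?thesis .
qed

lemma p_udm_pos:
  assumes K: "0 < K" and p0: "\<And>y. y \<in> Xsp K L \<Longrightarrow> 0 \<le> p0 y" and "(\<Sum>y\<in>Xsp K L. p0 y) = 1"
    and "\<alpha> 0 = 1" and "0 \<le> \<alpha> t" and "\<alpha> t < 1"
  shows "0 < p_udm K L \<alpha> p0 t x"
proof -
  have "\<not> (\<forall>y\<in>Xsp K L. p0 y \<le> 0)"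
    using sum_nonpos[of "Xsp K L" p0] assms(3) by auto
  then obtain y where y: "y \<in> Xsp K L" "0 < p0 y"
    by (auto simp: not_le)
  have "\<And>y. 0 < q_udm K L \<alpha> t 0 x y"
    using assms by (intro q_udm_pos) auto
  then show ?thesis
    unfolding p_udm_def using y p0
    by (intro sum_pos2[OF finite_Xsp y(1)]) (auto intro: mult_nonneg_nonneg less_imp_le)
qed

lemma sampler_law_eq_forward_chain:
  assumes K: "0 < K" and p0: "\<And>y. y \<in> Xsp K L \<Longrightarrow> 0 \<le> p0 y" and \<alpha>0: "\<alpha> 0 = 1"
    and xs: "xs \<in> {0..n} \<rightarrow>\<^sub>E Xsp K L"
    and \<alpha>_unit: "\<And>k. k \<le> n \<Longrightarrow> 0 \<le> \<alpha> (ts k) \<and> \<alpha> (ts k) \<le> 1"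
    and \<alpha>_lt: "\<And>k. 0 < k \<Longrightarrow> k \<le> n \<Longrightarrow> \<alpha> (ts k) < 1"
  shows "sampler_law K L \<alpha> p0 n ts xs
       = p_udm K L \<alpha> p0 (ts 0) (xs 0) * (\<Prod>i\<in>{1..n}. q_udm K L \<alpha> (ts i) (ts (i - 1)) (xs i) (xs (i - 1)))"
proof -
  let ?X = "Xsp K L"
  define Q where "Q k = (\<Prod>j\<in>{Suc k..n}. q_udm K L \<alpha> (ts j) (ts (j - 1)) (xs j) (xs (j - 1)))" for k
  \<comment> \<open>the invariant of \<open>remasked_step\<close>, weighted by the forward kernels above \<open>ts k\<close>\<close>
  define g where "g k u = Q k * p_abs K L \<alpha> p0 (ts k) (xs k) u / real (card ?X)" for k u
  define F where "F i u y v = den_abs K L \<alpha> p0 (ts (Suc i)) y (xs (Suc i)) u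
      * bridge_udm K L \<alpha> (ts i) (ts (Suc i)) (xs i) y (xs (Suc i))
      * u_kernel K L (\<alpha> (ts i)) v (xs i) y" for i u y v
  have "sampler_law K L \<alpha> p0 n ts xs
      = (\<Sum>us\<in>{0..n} \<rightarrow>\<^sub>E ?X. \<Sum>ys\<in>{0..<n} \<rightarrow>\<^sub>E ?X. g n (us n) * (\<Prod>i<n. F i (us (Suc i)) (ys i) (us i)))"
    unfolding sampler_law_def g_def Q_def F_def by simp
  also have "\<dots> = (\<Sum>u\<in>?X. g 0 u)"
  proof (rule sum_PiE_chain)
    fix k v assume k: "k < n"
    have "(\<Sum>u\<in>?X. \<Sum>y\<in>?X. g (Suc k) u * F k u y v)
        = Q (Suc k) / real (card ?X) * (\<Sum>u\<in>?X. \<Sum>y\<in>?X. p_abs K L \<alpha> p0 (ts (Suc k)) (xs (Suc k)) u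
            * den_abs K L \<alpha> p0 (ts (Suc k)) y (xs (Suc k)) u
            * bridge_udm K L \<alpha> (ts k) (ts (Suc k)) (xs k) y (xs (Suc k))
            * u_kernel K L (\<alpha> (ts k)) v (xs k) y)"
      by (simp add: g_def F_def sum_distrib_left mult_ac)
    also have "\<dots> = Q (Suc k) / real (card ?X)
        * (q_udm K L \<alpha> (ts (Suc k)) (ts k) (xs (Suc k)) (xs k) * p_abs K L \<alpha> p0 (ts k) (xs k) v)"
      using k xs \<alpha>_unit[of k] \<alpha>_unit[of "Suc k"] \<alpha>_lt[of "Suc k"]
      by (subst remasked_step[where \<alpha>=\<alpha>, OF K p0 _ _ \<alpha>0]) (auto simp: PiE_iff)
    also have "\<dots> = g k v"
      using k by (simp add: g_def Q_def prod.atLeast_Suc_atMost)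
    finally show "(\<Sum>u\<in>?X. \<Sum>y\<in>?X. g (Suc k) u * F k u y v) = g k v" .
  qed
  also have "\<dots> = Q 0 * p_udm K L \<alpha> p0 (ts 0) (xs 0)"
    using sum_p_abs_eq_p_udm[where \<alpha>=\<alpha>, OF K _ \<alpha>0] xs K
    by (simp add: g_def card_Xsp PiE_iff flip: sum_divide_distrib sum_distrib_left)
  finally show ?thesis
    by (simp add: Q_def)
qed

lemma reverse_chain_eq_forward_chain:
  fixes n :: nat
  assumes "\<And>i. 0 < i \<Longrightarrow> i \<le> n \<Longrightarrow> p_udm K L \<alpha> p0 (ts i) (xs i) \<noteq> 0"
  shows "p_udm K L \<alpha> p0 (ts n) (xs n) * (\<Prod>i\<in>{1..n}. rev_udm K L \<alpha> p0 (ts (i - 1)) (ts i) (xs (i - 1)) (xs i))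
       = p_udm K L \<alpha> p0 (ts 0) (xs 0) * (\<Prod>i\<in>{1..n}. q_udm K L \<alpha> (ts i) (ts (i - 1)) (xs i) (xs (i - 1)))"
proof -
  let ?P = "\<lambda>i. p_udm K L \<alpha> p0 (ts i) (xs i)"
  have "(\<Prod>i\<in>{1..n}. rev_udm K L \<alpha> p0 (ts (i - 1)) (ts i) (xs (i - 1)) (xs i))
      = (\<Prod>i\<in>{1..n}. ?P (i - 1) / ?P i) * (\<Prod>i\<in>{1..n}. q_udm K L \<alpha> (ts i) (ts (i - 1)) (xs i) (xs (i - 1)))"
    by (simp add: rev_udm_def flip: prod.distrib)
  then show ?thesis
    using prod_ratio_telescope[where P = ?P and n = n] assms by (simp flip: mult.assoc)
qed

lemma alpha_on_grid:
  fixes ts :: "nat \<Rightarrow> real"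
  assumes alpha_range: "\<And>t. 0 < t \<Longrightarrow> t \<le> 1 \<Longrightarrow> 0 < \<alpha> t \<and> \<alpha> t < 1"
    and grid_mono: "\<And>i. i < n \<Longrightarrow> ts i < ts (Suc i)"
    and grid0: "ts 0 = 0" and grid1: "ts n = 1" and k: "0 < k" "k \<le> n"
  shows "0 < \<alpha> (ts k) \<and> \<alpha> (ts k) < 1"
proof -
  have "{0..<k} \<subseteq> {..<n}" "{k..<n} \<subseteq> {..<n}"
    using k by auto
  then have "0 < ts k \<and> ts k \<le> 1"
    using lift_Suc_mono_less_ivl[of "{..<n}" ts 0 k] lift_Suc_mono_le_ivl[of "{..<n}" ts k n]
      grid_mono grid0 grid1 k by (auto intro: less_imp_le)
  then show ?thesis
    using alpha_range by blast
qed

theorem mainTheorem7: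
  fixes K L n :: nat and \<alpha> :: "real \<Rightarrow> real" and p0 :: "(nat \<Rightarrow> nat) \<Rightarrow> real"
    and ts :: "nat \<Rightarrow> real" and xs :: "nat \<Rightarrow> (nat \<Rightarrow> nat)"
  assumes K: "K \<ge> 2" and L: "L \<ge> 1"
    and alpha_dec: "\<And>s t. 0 \<le> s \<Longrightarrow> s < t \<Longrightarrow> t \<le> 1 \<Longrightarrow> \<alpha> t < \<alpha> s"
    and alpha0: "\<alpha> 0 = 1"
    and alpha_range: "\<And>t. 0 < t \<Longrightarrow> t \<le> 1 \<Longrightarrow> 0 < \<alpha> t \<and> \<alpha> t < 1"
    and p0_nonneg: "\<And>x. x \<in> Xsp K L \<Longrightarrow> p0 x \<ge> 0"
    and p0_sum: "(\<Sum>x\<in>Xsp K L. p0 x) = 1"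
    and n: "n \<ge> 1"
    and grid_mono: "\<And>i. i < n \<Longrightarrow> ts i < ts (Suc i)"
    and grid0: "ts 0 = 0" and grid1: "ts n = 1"
    and xs: "xs \<in> {0..n} \<rightarrow>\<^sub>E Xsp K L"
  shows "sampler_law K L \<alpha> p0 n ts xs =
           p_udm K L \<alpha> p0 (ts n) (xs n) *
           (\<Prod>i\<in>{1..n}. rev_udm K L \<alpha> p0 (ts (i - 1)) (ts i) (xs (i - 1)) (xs i))"
proof -
  have K0: "0 < K"
    using K by simp
  have \<alpha>_lt: "0 < \<alpha> (ts k) \<and> \<alpha> (ts k) < 1" if "0 < k" "k \<le> n" for k
    using alpha_on_grid[OF alpha_range grid_mono grid0 grid1 that] .
  have \<alpha>_unit: "0 \<le> \<alpha> (ts k) \<and> \<alpha> (ts k) \<le> 1" if "k \<le> n" for k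
    using \<alpha>_lt[of k] that grid0 alpha0 by (cases "k = 0") auto
  have "sampler_law K L \<alpha> p0 n ts xs
      = p_udm K L \<alpha> p0 (ts 0) (xs 0) * (\<Prod>i\<in>{1..n}. q_udm K L \<alpha> (ts i) (ts (i - 1)) (xs i) (xs (i - 1)))"
    using \<alpha>_unit \<alpha>_lt by (intro sampler_law_eq_forward_chain K0 p0_nonneg alpha0 xs) auto
  also have "\<dots> = p_udm K L \<alpha> p0 (ts n) (xs n) *
           (\<Prod>i\<in>{1..n}. rev_udm K L \<alpha> p0 (ts (i - 1)) (ts i) (xs (i - 1)) (xs i))"
    using p_udm_pos[where \<alpha>=\<alpha>, OF K0 p0_nonneg p0_sum alpha0] \<alpha>_lt
    by (intro reverse_chain_eq_forward_chain[symmetric]) (simp add: less_imp_le less_imp_neq[symmetric])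
  finally show ?thesis .
qed

end
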